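(* Let $\bar O=O_1,\dots,O_k$ be fresh propositional constants, $\Gamma=\{x_i:A_i\}_{1\le i\le n}$, $\Delta=\{a_j:B_j\}_{1\le j\le m}$ and $1\le l\le k$. If $\Gamma\vdash_{\bar O}t:O_l;\Delta$, then $t=x_j$ for some $1\le j\le n$ and $A_j=O_l$.
   Context: $\lambda\mu$-terms: $t::= x\mid \lambda x.t\mid (t\;t)\mid \mu a.t\mid (a\;t)$ over disjoint infinite sets of $\lambda$-variables and $\mu$-variables. Types are built from propositional variables, the constants $O_1,\dots,O_k$, and $\perp$ with $\to$. An $\bar O$-type is defined by: each $O_i$ is an $\bar O$-type; if $B$ is an $\bar O$-type then $A\to B$ is an $\bar O$-type for any type $A$. The system $\vdash_{\bar O}$ derives judgements $\Gamma\vdash_{\bar O}t:A;\Delta$ by the rules: (ax) $\Gamma\vdash_{\bar O}x:A;\Delta$ if $x:A\in\Gamma$, provided $\Delta$ contains no declaration $a:C$ with $C$ an $\bar O$-type; ($\to_i$) from $\Gamma,x:A\vdash_{\bar O}t:B;\Delta$ infer $\Gamma\vdash_{\bar O}\lambda x.t:A\to B;\Delta$; ($\to_e$) from $\Gamma\vdash_{\bar O}u:A\to B;\Delta$ and $\Gamma\vdash_{\bar O}v:A;\Delta$ infer $\Gamma\vdash_{\bar O}(u\;v):B;\Delta$, provided $B$ is not an $\bar O$-type; ($\mu$) from $\Gamma\vdash_{\bar O}t:\perp;\Delta,a:A$ infer $\Gamma\vdash_{\bar O}\mu a.t:A;\Delta$; ($\perp$) from $\Gamma\vdash_{\bar O}t:A;\Delta,a:A$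 infer $\Gamma\vdash_{\bar O}(a\;t):\perp;\Delta,a:A$. *)

theory Defs
  imports Main
begin

text \<open>Lambda-mu terms over lambda-variables of type 'x and mu-variables of type 'm
  (disjoint by typing; both instantiated with infinite types in the statement).\<close>
datatype ('x, 'm) lmterm =
    Var 'x
  | Lam 'x "('x, 'm) lmterm"
  | App "('x, 'm) lmterm" "('x, 'm) lmterm"
  | Mu 'm "('x, 'm) lmterm"
  | Name 'm "('x, 'm) lmterm"

datatype ty =
    PV nat
  | OC nat
  | Bot
  | Arr ty ty

inductive is_Otype :: "nat \<Rightarrow> ty \<Rightarrow> bool" for k :: nat where
  Oconst: "1 \<le> i \<Longrightarrow> i \<le> k \<Longrightarrow> is_Otype k (OC i)"
| Oarr: "is_Otype k B \<Longrightarrow> is_Otype k (Arr A B)"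

inductive typO :: "nat \<Rightarrow> ('x \<rightharpoonup> ty) \<Rightarrow> ('x, 'm) lmterm \<Rightarrow> ty \<Rightarrow> ('m \<rightharpoonup> ty) \<Rightarrow> bool"
  for k :: nat where
  ax: "\<Gamma> x = Some A \<Longrightarrow> (\<forall>a C. \<Delta> a = Some C \<longrightarrow> \<not> is_Otype k C)
       \<Longrightarrow> typO k \<Gamma> (Var x) A \<Delta>"
| arr_i: "\<Gamma> x = None \<Longrightarrow> typO k (\<Gamma>(x \<mapsto> A)) t B \<Delta>
       \<Longrightarrow> typO k \<Gamma> (Lam x t) (Arr A B) \<Delta>"
| arr_e: "typO k \<Gamma> u (Arr A B) \<Delta> \<Longrightarrow> typO k \<Gamma> v A \<Delta> \<Longrightarrow> \<not> is_Otype k B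
       \<Longrightarrow> typO k \<Gamma> (App u v) B \<Delta>"
| mu: "\<Delta> a = None \<Longrightarrow> typO k \<Gamma> t Bot (\<Delta>(a \<mapsto> A))
       \<Longrightarrow> typO k \<Gamma> (Mu a t) A \<Delta>"
| bot: "\<Delta> a = Some A \<Longrightarrow> typO k \<Gamma> t A \<Delta>
       \<Longrightarrow> typO k \<Gamma> (Name a t) Bot \<Delta>"

end

theory Submission
  imports Defs
begin

text \<open>Derivations only ever extend the \<open>\<mu>\<close>-context, and every derivation ends in axioms,
  whose side condition forbids an \<open>O\<close>-type there. Hence a judgement of type \<open>O\<^sub>l\<close> can
  come neither from \<open>\<rightarrow>\<^sub>e\<close> (which excludes \<open>O\<close>-types) nor from \<open>\<mu>\<close> (whose premise
  declares \<open>a : O\<^sub>l\<close>), and must be an axiom.\<close>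

lemma typO_mu_context_no_Otype:
  assumes "typO k \<Gamma> t A \<Delta>" and "\<Delta> a = Some C"
  shows "\<not> is_Otype k C"
  using assms
proof (induction arbitrary: a rule: typO.induct)
  case (mu \<Delta> b \<Gamma> t A)
  then show ?case by (metis fun_upd_other option.distinct(1))
qed blast+

lemma typO_OC_imp_Var:
  assumes "typO k \<Gamma> t (OC l) \<Delta>" and "1 \<le> l" and "l \<le> k"
  shows "\<exists>x. t = Var x \<and> \<Gamma> x = Some (OC l)"
  using assms(1)
proof cases
  case (ax x)
  then show ?thesis by blast
next
  case arr_e
  with assms(2,3) show ?thesis by (blast intro: is_Otype.Oconst)
next
  case (mu a t')
  with assms(2,3) show ?thesis
    by (metis fun_upd_same is_Otype.Oconst typO_mu_context_no_Otype)
qed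

theorem mainTheorem16:
  fixes \<Gamma> :: "nat \<rightharpoonup> ty" and \<Delta> :: "nat \<rightharpoonup> ty"
    and t :: "(nat, nat) lmterm" and k l :: nat
  assumes "finite (dom \<Gamma>)" and "finite (dom \<Delta>)"
    and "1 \<le> l" and "l \<le> k"
    and "typO k \<Gamma> t (OC l) \<Delta>"
  shows "\<exists>x. t = Var x \<and> \<Gamma> x = Some (OC l)"
  using typO_OC_imp_Var assms(3-5) by blast

end
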